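(* Let $A$ be a nonempty finite set with $|A|=n$ and $\Sigma\in\mathbb{R}$. Define $\varphi$ on metrics $d$ on $A$ by $\varphi(d)(x,y)=d(x,\cdot)+d(y,\cdot)-d(x,y)-d(\cdot,\cdot)+\Sigma/n$, and $\psi$ on $\Sigma$-proximities $\sigma$ on $A$ by $\psi(\sigma)(x,y)=\tfrac12(\sigma(x,x)+\sigma(y,y))-\sigma(x,y)$. Then $\psi(\varphi(d))=d$ for every metric $d$ on $A$, and $\varphi(\psi(\sigma))=\sigma$ for every $\Sigma$-proximity $\sigma$ on $A$.
   Context: A metric on $A$ is a function $d:A^2\to\mathbb{R}$ such that for all $x,y,z\in A$: $d(x,y)=0$ iff $x=y$, and $d(x,y)+d(x,z)-d(y,z)\ge 0$. Notation: $d(x,\cdot)=\frac1n\sum_{t\in A}d(x,t)$, $d(\cdot,\cdot)=\frac1{n^2}\sum_{s,t\in A}d(s,t)$ (and likewise for any function on $A^2$). A function $\sigma:A^2\to\mathbb{R}$ is a $\Sigma$-proximity on $A$ if for all $x,y,z\in A$: (1) $\sum_{t\in A}\sigma(x,t)=\Sigma$; (2) $\sigma(x,y)+\sigma(x,z)-\sigma(y,z)\le\sigma(x,x)$, with strict inequality whenever $z=y$ and $x\ne y$. *)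

theory Defs
  imports Complex_Main
begin

definition metric_on :: "'a set \<Rightarrow> ('a \<Rightarrow> 'a \<Rightarrow> real) \<Rightarrow> bool" where
  "metric_on A d \<longleftrightarrow>
     (\<forall>x\<in>A. \<forall>y\<in>A. d x y = 0 \<longleftrightarrow> x = y) \<and>
     (\<forall>x\<in>A. \<forall>y\<in>A. \<forall>z\<in>A. d x y + d x z - d y z \<ge> 0)"

definition proximity_on :: "'a set \<Rightarrow> real \<Rightarrow> ('a \<Rightarrow> 'a \<Rightarrow> real) \<Rightarrow> bool" where
  "proximity_on A S \<sigma> \<longleftrightarrow>
     (\<forall>x\<in>A. (\<Sum>t\<in>A. \<sigma> x t) = S) \<and>
     (\<forall>x\<in>A. \<forall>y\<in>A. \<forall>z\<in>A. \<sigma> x y + \<sigma> x z - \<sigma> y z \<le> \<sigma> x x) \<and>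
     (\<forall>x\<in>A. \<forall>y\<in>A. x \<noteq> y \<longrightarrow> \<sigma> x y + \<sigma> x y - \<sigma> y y < \<sigma> x x)"

definition avg1 :: "'a set \<Rightarrow> ('a \<Rightarrow> 'a \<Rightarrow> real) \<Rightarrow> 'a \<Rightarrow> real" where
  "avg1 A d x = (\<Sum>t\<in>A. d x t) / real (card A)"

definition avg2 :: "'a set \<Rightarrow> ('a \<Rightarrow> 'a \<Rightarrow> real) \<Rightarrow> real" where
  "avg2 A d = (\<Sum>s\<in>A. \<Sum>t\<in>A. d s t) / (real (card A))^2"

definition phi :: "'a set \<Rightarrow> real \<Rightarrow> ('a \<Rightarrow> 'a \<Rightarrow> real) \<Rightarrow> ('a \<Rightarrow> 'a \<Rightarrow> real)" where
  "phi A S d = (\<lambda>x y. avg1 A d x + avg1 A d y - d x y - avg2 A d + S / real (card A))"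

definition psi :: "('a \<Rightarrow> 'a \<Rightarrow> real) \<Rightarrow> ('a \<Rightarrow> 'a \<Rightarrow> real)" where
  "psi \<sigma> = (\<lambda>x y. (\<sigma> x x + \<sigma> y y) / 2 - \<sigma> x y)"

end

theory Submission
  imports Defs
begin

text \<open>Both identities are linear-algebraic: \<open>psi\<close> inverts \<open>phi\<close> up to the diagonal of \<open>d\<close>, which a
  metric kills, and \<open>phi\<close> inverts \<open>psi\<close> up to row-sum corrections, which cancel as soon as all
  rows of \<open>\<sigma>\<close> sum to \<open>S\<close>. No triangle-type inequality is needed in either direction.\<close>

lemma psi_phi: "psi (phi A S d) x y = d x y - (d x x + d y y) / 2"
  by (simp add: psi_def phi_def field_simps)

lemma metric_on_diag_zero: "metric_on A d \<Longrightarrow> x \<in> A \<Longrightarrow> d x x = 0"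
  by (simp add: metric_on_def)

lemma avg2_eq_avg1_mean: "avg2 A d = (\<Sum>s\<in>A. avg1 A d s) / real (card A)"
  by (simp add: avg2_def avg1_def sum_divide_distrib[symmetric] power2_eq_square)

lemma avg1_psi:
  assumes "finite A" and "A \<noteq> {}"
  shows "avg1 A (psi \<sigma>) u = \<sigma> u u / 2 + (\<Sum>t\<in>A. \<sigma> t t) / (2 * real (card A)) - avg1 A \<sigma> u"
proof -
  have "card A > 0" using assms by (simp add: card_gt_0_iff)
  then show ?thesis
    by (simp add: avg1_def psi_def sum_subtractf sum.distrib add_divide_distrib
        diff_divide_distrib sum_divide_distrib[symmetric])
qed

lemma phi_psi:
  assumes "finite A" and "A \<noteq> {}" and rows: "\<And>u. u \<in> A \<Longrightarrow> (\<Sum>t\<in>A. \<sigma> u t) = S"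
    and "x \<in> A" and "y \<in> A"
  shows "phi A S (psi \<sigma>) x y = \<sigma> x y"
proof -
  define n where "n = real (card A)"
  define \<tau> where "\<tau> = (\<Sum>t\<in>A. \<sigma> t t) / n"
  have "n > 0" using assms by (simp add: n_def card_gt_0_iff)
  have avg1_row: "avg1 A (psi \<sigma>) u = \<sigma> u u / 2 + \<tau> / 2 - S / n" if "u \<in> A" for u
    using avg1_psi[OF assms(1,2)] rows[OF that] by (simp add: avg1_def n_def \<tau>_def)
  have "avg2 A (psi \<sigma>) = (\<Sum>s\<in>A. \<sigma> s s / 2 + \<tau> / 2 - S / n) / n"
    by (simp add: avg2_eq_avg1_mean avg1_row n_def cong: sum.cong)
  also have "\<dots> = \<tau> - S / n"
    using \<open>n > 0\<close> by (simp add: sum_subtractf sum.distrib \<tau>_def n_def field_simps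
        sum_divide_distrib[symmetric] sum_distrib_left[symmetric])
  finally have avg2_psi: "avg2 A (psi \<sigma>) = \<tau> - S / n" .
  show ?thesis
    unfolding phi_def avg1_row[OF \<open>x \<in> A\<close>] avg1_row[OF \<open>y \<in> A\<close>] avg2_psi n_def[symmetric]
    by (simp add: psi_def field_simps)
qed

theorem lemma1:
  fixes A :: "'a set" and S :: real
  assumes "finite A" and "A \<noteq> {}"
  shows "(\<forall>d. metric_on A d \<longrightarrow> (\<forall>x\<in>A. \<forall>y\<in>A. psi (phi A S d) x y = d x y))
       \<and> (\<forall>\<sigma>. proximity_on A S \<sigma> \<longrightarrow> (\<forall>x\<in>A. \<forall>y\<in>A. phi A S (psi \<sigma>) x y = \<sigma> x y))"
proof (intro conjI allI impI ballI)
  fix d x y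
  assume "metric_on A d" and "x \<in> A" and "y \<in> A"
  then show "psi (phi A S d) x y = d x y"
    by (simp add: psi_phi metric_on_diag_zero)
next
  fix \<sigma> x y
  assume "proximity_on A S \<sigma>" and "x \<in> A" and "y \<in> A"
  then show "phi A S (psi \<sigma>) x y = \<sigma> x y"
    using assms by (intro phi_psi) (auto simp: proximity_on_def)
qed

end
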